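(* For every $n\in\mathbb{N}$ and every $u\in\mathbb{N}_0$ there exists a spidernet with data $(2n,\,n+1+u,\,n)$ if and only if $u\le 2n-1$.
   Context: A rooted graph is $(V,A,o)$ with $V$ countable, $o\in V$, $A:V\times V\to\{0,1\}$ symmetric with $A_{xx}=0$; $x\sim y$ iff $A_{xy}=1$. For a connected rooted graph let $d(x,y)$ be the graph distance and, for $\varepsilon\in\{-1,0,1\}$, $\omega_\varepsilon(x)=|\{y\in V: y\sim x,\ d(o,y)=d(o,x)+\varepsilon\}|$. For $a\in\mathbb{N}$, $b\in\mathbb{N}\setminus\{1\}$, $c\in\mathbb{N}$ with $c\le b-1$, a spidernet with data $(a,b,c)$ is a connected rooted graph with $\omega_{+1}(o)=a$, $\omega_{-1}(o)=\omega_0(o)=0$, and $\omega_{+1}(x)=c$, $\omega_{-1}(x)=1$, $\omega_0(x)=b-1-c$ for all $x\in V\setminus\{o\}$. *)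

theory Defs
  imports "HOL-Library.Countable_Set"
begin

text \<open>A rooted graph (V, A, r): adjacency A is a symmetric irreflexive relation,
  assumed to vanish outside V \<times> V (A encodes the 0/1 matrix: A x y iff A_xy = 1).\<close>

definition rooted_graph :: "'v set \<Rightarrow> ('v \<Rightarrow> 'v \<Rightarrow> bool) \<Rightarrow> 'v \<Rightarrow> bool" where
  "rooted_graph V A r \<longleftrightarrow> countable V \<and> r \<in> V \<and>
     (\<forall>x y. A x y \<longrightarrow> x \<in> V \<and> y \<in> V) \<and>
     (\<forall>x y. A x y = A y x) \<and> (\<forall>x. \<not> A x x)"

definition walk_betw :: "('v \<Rightarrow> 'v \<Rightarrow> bool) \<Rightarrow> 'v \<Rightarrow> 'v list \<Rightarrow> 'v \<Rightarrow> bool" where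
  "walk_betw A x xs y \<longleftrightarrow> xs \<noteq> [] \<and> hd xs = x \<and> last xs = y \<and>
     (\<forall>i. Suc i < length xs \<longrightarrow> A (xs ! i) (xs ! Suc i))"

definition connected_graph :: "'v set \<Rightarrow> ('v \<Rightarrow> 'v \<Rightarrow> bool) \<Rightarrow> bool" where
  "connected_graph V A \<longleftrightarrow> (\<forall>x\<in>V. \<forall>y\<in>V. \<exists>xs. walk_betw A x xs y)"

definition gdist :: "('v \<Rightarrow> 'v \<Rightarrow> bool) \<Rightarrow> 'v \<Rightarrow> 'v \<Rightarrow> nat" where
  "gdist A x y = (LEAST n. \<exists>xs. walk_betw A x xs y \<and> length xs = Suc n)"

text \<open>omega_eps(x) as a set of neighbours; its size is the paper's omega_eps(x).\<close>
definition omega_set :: "'v set \<Rightarrow> ('v \<Rightarrow> 'v \<Rightarrow> bool) \<Rightarrow> 'v \<Rightarrow> int \<Rightarrow> 'v \<Rightarrow> 'v set" where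
  "omega_set V A r e x = {y \<in> V. A y x \<and> int (gdist A r y) = int (gdist A r x) + e}"

definition has_card :: "'a set \<Rightarrow> nat \<Rightarrow> bool" where
  "has_card S k \<longleftrightarrow> finite S \<and> card S = k"

definition spidernet :: "'v set \<Rightarrow> ('v \<Rightarrow> 'v \<Rightarrow> bool) \<Rightarrow> 'v \<Rightarrow> nat \<Rightarrow> nat \<Rightarrow> nat \<Rightarrow> bool" where
  "spidernet V A r a b c \<longleftrightarrow>
     1 \<le> a \<and> 2 \<le> b \<and> 1 \<le> c \<and> c \<le> b - 1 \<and>
     rooted_graph V A r \<and> connected_graph V A \<and>
     has_card (omega_set V A r 1 r) a \<and>
     has_card (omega_set V A r (-1) r) 0 \<and>
     has_card (omega_set V A r 0 r) 0 \<and>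
     (\<forall>x \<in> V - {r}.
        has_card (omega_set V A r 1 x) c \<and>
        has_card (omega_set V A r (-1) x) 1 \<and>
        has_card (omega_set V A r 0 x) (b - 1 - c))"

end

theory Submission
  imports Defs "HOL-Library.Nat_Bijection"
begin

text \<open>
  Necessity: a neighbour x of the root is at distance 1, and each neighbour of x at distance 1 is
  a neighbour of the root other than x, so b - 1 - c \<le> a - 1, which for the data
  (2n, n + 1 + u, n) reads u \<le> 2n - 1.
  Sufficiency: take the rooted tree in which the root has 2n children and every other vertex has
  n children, so that level k \<ge> 1 has 2n^k vertices, and join the vertices of each level by a
  u-regular circulant graph on \<int>/2n^k, which exists since u < 2n \<le> 2n^k.
\<close>

lemma walk_betw_snoc:
  assumes "walk_betw A x xs y" and "A y z"
  shows "walk_betw A x (xs @ [z]) z"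
  unfolding walk_betw_def
proof (intro conjI allI impI)
  fix i assume i: "Suc i < length (xs @ [z])"
  have xs: "xs \<noteq> []" "last xs = y" "\<And>i. Suc i < length xs \<Longrightarrow> A (xs ! i) (xs ! Suc i)"
    using assms(1) by (auto simp: walk_betw_def)
  show "A ((xs @ [z]) ! i) ((xs @ [z]) ! Suc i)"
  proof (cases "Suc i < length xs")
    case True
    then show ?thesis using xs(3) by (simp add: nth_append)
  next
    case False
    then have "i = length xs - 1" using i by simp
    then show ?thesis using xs(1,2) assms(2) by (simp add: nth_append last_conv_nth)
  qed
qed (use assms in \<open>auto simp: walk_betw_def\<close>)

lemma walk_betw_Cons:
  assumes "A x y" and "walk_betw A y ys z"
  shows "walk_betw A x (x # ys) z"
  unfolding walk_betw_def
proof (intro conjI allI impI)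
  fix i assume i: "Suc i < length (x # ys)"
  show "A ((x # ys) ! i) ((x # ys) ! Suc i)"
  proof (cases i)
    case 0
    then show ?thesis using assms by (auto simp: walk_betw_def hd_conv_nth)
  next
    case (Suc j)
    then show ?thesis using assms(2) i by (simp add: walk_betw_def)
  qed
qed (use assms in \<open>auto simp: walk_betw_def\<close>)

lemma gdist_refl: "gdist A x x = 0"
  unfolding gdist_def by (rule Least_eq_0) (rule exI[of _ "[x]"], simp add: walk_betw_def)

lemma walk_betw_of_length_gdist:
  assumes "walk_betw A x xs y"
  shows "\<exists>ys. walk_betw A x ys y \<and> length ys = Suc (gdist A x y)"
proof -
  have "xs \<noteq> []" using assms by (simp add: walk_betw_def)
  then have "\<exists>m xs. walk_betw A x xs y \<and> length xs = Suc m"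
    using assms by (intro exI[of _ "length xs - 1"]) auto
  then show ?thesis unfolding gdist_def by (rule LeastI_ex)
qed

lemma adjacent_if_gdist_eq_1:
  assumes "walk_betw A x xs y" and "gdist A x y = 1"
  shows "A x y"
proof -
  obtain ys where "walk_betw A x ys y" "length ys = 2"
    using walk_betw_of_length_gdist[OF assms(1)] assms(2) by auto
  then show ?thesis by (auto simp: walk_betw_def hd_conv_nth last_conv_nth)
qed

locale graded_graph =
  fixes V :: "'v set" and A :: "'v \<Rightarrow> 'v \<Rightarrow> bool" and r :: 'v and lv :: "'v \<Rightarrow> nat"
  assumes adj_in_V: "A x y \<Longrightarrow> x \<in> V \<and> y \<in> V"
    and adj_sym: "A x y = A y x"
    and root_in_V: "r \<in> V"
    and lv_root: "lv r = 0"
    and lv_adj_le: "A x y \<Longrightarrow> lv y \<le> Suc (lv x)"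
    and parent_exists: "x \<in> V \<Longrightarrow> x \<noteq> r \<Longrightarrow> \<exists>y. A y x \<and> lv x = Suc (lv y)"
begin

lemma lv_eq_0_iff: "x \<in> V \<Longrightarrow> lv x = 0 \<longleftrightarrow> x = r"
  using lv_root parent_exists[of x] by (cases "x = r") auto

lemma walk_to_root: "x \<in> V \<Longrightarrow> \<exists>xs. walk_betw A x xs r"
proof (induction "lv x" arbitrary: x)
  case 0
  then have "x = r" using lv_eq_0_iff by simp
  then have "walk_betw A x [r] r" by (simp add: walk_betw_def)
  then show ?case by blast
next
  case (Suc k)
  then have "x \<noteq> r" using lv_root by auto
  then obtain y where y: "A y x" "lv x = Suc (lv y)" using parent_exists Suc(3) by blast
  moreover have "y \<in> V" "k = lv y" using adj_in_V y Suc(2) by auto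
  ultimately obtain ys where "walk_betw A y ys r" using Suc(1) by blast
  moreover have "A x y" using y(1) adj_sym by blast
  ultimately show ?case using walk_betw_Cons[of A x y ys r] by blast
qed

lemma walk_through_root:
  assumes "walk_betw A s xs r" and "y \<in> V"
  shows "\<exists>ys. walk_betw A s ys y \<and> length ys = length xs + lv y"
  using assms(2)
proof (induction "lv y" arbitrary: y)
  case 0
  then have "y = r" using lv_eq_0_iff by simp
  then show ?case using assms(1) 0 by auto
next
  case (Suc k)
  then have "y \<noteq> r" using lv_root by auto
  then obtain x where x: "A x y" "lv y = Suc (lv x)" using parent_exists Suc(3) by blast
  moreover have "x \<in> V" "k = lv x" using adj_in_V x Suc(2) by auto
  ultimately obtain xs' where "walk_betw A s xs' x" "length xs' = length xs + lv x"
    using Suc(1) by blast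
  then show ?case using walk_betw_snoc[of A s xs' x y] x by (intro exI[of _ "xs' @ [y]"]) simp
qed

lemma lv_less_length_walk:
  assumes w: "walk_betw A r xs x"
  shows "lv x < length xs"
proof -
  have "lv (xs ! i) \<le> i" if "i < length xs" for i
    using that
  proof (induction i)
    case 0
    then show ?case using w lv_root by (auto simp: walk_betw_def hd_conv_nth)
  next
    case (Suc i)
    then show ?case using w lv_adj_le[of "xs ! i" "xs ! Suc i"] by (auto simp: walk_betw_def)
  qed
  moreover have "xs \<noteq> []" "x = xs ! (length xs - 1)"
    using w by (auto simp: walk_betw_def last_conv_nth)
  ultimately have "lv x \<le> length xs - 1" by simp
  then show ?thesis using \<open>xs \<noteq> []\<close> by (cases xs) auto
qed

lemma connected: "connected_graph V A"
  unfolding connected_graph_def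
proof (intro ballI)
  fix x y assume "x \<in> V" "y \<in> V"
  then obtain xs where "walk_betw A x xs r" using walk_to_root by blast
  then show "\<exists>ys. walk_betw A x ys y" using walk_through_root \<open>y \<in> V\<close> by blast
qed

lemma gdist_root_eq_lv:
  assumes "x \<in> V"
  shows "gdist A r x = lv x"
  unfolding gdist_def
proof (rule Least_equality)
  have "walk_betw A r [r] r" by (simp add: walk_betw_def)
  from walk_through_root[OF this assms]
  show "\<exists>xs. walk_betw A r xs x \<and> length xs = Suc (lv x)" by simp
next
  fix m assume "\<exists>xs. walk_betw A r xs x \<and> length xs = Suc m"
  then obtain xs where "walk_betw A r xs x" "length xs = Suc m" by blast
  then show "lv x \<le> m" using lv_less_length_walk by fastforce
qed

lemma omega_set_eq:
  assumes "x \<in> V"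
  shows "omega_set V A r e x = {y. A y x \<and> int (lv y) = int (lv x) + e}"
proof -
  have "gdist A r y = lv y" if "A y x" for y
    using that adj_in_V gdist_root_eq_lv by blast
  then show ?thesis
    unfolding omega_set_def using assms adj_in_V gdist_root_eq_lv by auto
qed

end

text \<open>Adjacency in the circulant graph on \<int>/2p whose connection set consists of the u residues
  closest to p (p itself left out when u is even); it is u-regular whenever u < 2p.\<close>

definition near_antipode :: "nat \<Rightarrow> nat \<Rightarrow> nat \<Rightarrow> nat \<Rightarrow> bool" where
  "near_antipode p u i j \<longleftrightarrow> (let s = (int j - int i) mod (2 * int p) in
     \<bar>s - int p\<bar> \<le> int (u div 2) \<and> (even u \<longrightarrow> s \<noteq> int p))"

lemma neg_mod_double_sub:
  fixes x p :: int
  assumes "0 < p"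
  shows "\<bar>(- x) mod (2 * p) - p\<bar> = \<bar>x mod (2 * p) - p\<bar>"
    and "(- x) mod (2 * p) = p \<longleftrightarrow> x mod (2 * p) = p"
  using assms by (auto simp: zmod_zminus1_eq_if)

lemma near_antipode_sym: "near_antipode p u i j = near_antipode p u j i"
proof (cases "p = 0")
  case False
  have "(int i - int j) mod (2 * int p) = (- (int j - int i)) mod (2 * int p)" by simp
  then show ?thesis using neg_mod_double_sub[of "int p" "int j - int i"] False
    by (simp add: near_antipode_def Let_def)
qed (auto simp: near_antipode_def)

lemma near_antipode_irrefl: "u < 2 * p \<Longrightarrow> \<not> near_antipode p u i i"
  by (simp add: near_antipode_def)

lemma card_shifted_residues:
  fixes m i :: nat
  assumes "0 < m"
  shows "card {j. j < m \<and> P ((int j - int i) mod int m)} = card {s. 0 \<le> s \<and> s < int m \<and> P s}"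
proof -
  let ?f = "\<lambda>j. (int j - int i) mod int m"
  have inj: "inj_on ?f {..<m}"
  proof (rule inj_onI)
    fix a b assume "a \<in> {..<m}" "b \<in> {..<m}" "?f a = ?f b"
    then have "(int a - int i + int i) mod int m = (int b - int i + int i) mod int m"
      by (intro mod_add_cong) simp_all
    then show "a = b" using \<open>a \<in> {..<m}\<close> \<open>b \<in> {..<m}\<close> by simp
  qed
  have onto: "?f ` {..<m} = {0..<int m}"
  proof (rule card_subset_eq)
    show "?f ` {..<m} \<subseteq> {0..<int m}" using assms by auto
    show "card (?f ` {..<m}) = card {0..<int m}" using card_image[OF inj] by simp
  qed simp
  have "card {j. j < m \<and> P (?f j)} = card {j \<in> {..<m}. P (?f j)}"
    by (rule arg_cong[where f = card]) auto
  also have "\<dots> = card (?f ` {j \<in> {..<m}. P (?f j)})"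
    by (rule sym, rule card_image, rule inj_on_subset[OF inj]) auto
  also have "?f ` {j \<in> {..<m}. P (?f j)} = {s \<in> ?f ` {..<m}. P s}" by auto
  also have "\<dots> = {s. 0 \<le> s \<and> s < int m \<and> P s}" unfolding onto by auto
  finally show ?thesis .
qed

lemma card_residues_near_middle:
  fixes p u :: nat
  assumes "u < 2 * p"
  shows "card {s::int. 0 \<le> s \<and> s < 2 * int p \<and> \<bar>s - int p\<bar> \<le> int (u div 2) \<and> (even u \<longrightarrow> s \<noteq> int p)} = u"
proof -
  define t where "t = u div 2"
  have "t < p" using assms unfolding t_def by linarith
  then have eq: "{s::int. 0 \<le> s \<and> s < 2 * int p \<and> \<bar>s - int p\<bar> \<le> int t \<and> (even u \<longrightarrow> s \<noteq> int p)}
     = {int p - int t .. int p + int t} - (if even u then {int p} else {})"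
    by auto
  show ?thesis
  proof (cases "even u")
    case True
    then have "u = 2 * t" unfolding t_def by simp
    then show ?thesis using eq True unfolding t_def[symmetric] by (simp add: card_Diff_singleton)
  next
    case False
    then have "u = 2 * t + 1" unfolding t_def by presburger
    then show ?thesis using eq False unfolding t_def[symmetric] by simp
  qed
qed

lemma card_near_antipode:
  assumes "u < 2 * p"
  shows "card {j. j < 2 * p \<and> near_antipode p u i j} = u"
proof -
  have "card {j. j < 2 * p \<and> near_antipode p u i j}
      = card {s. 0 \<le> s \<and> s < int (2 * p) \<and> \<bar>s - int p\<bar> \<le> int (u div 2) \<and> (even u \<longrightarrow> s \<noteq> int p)}"
    unfolding near_antipode_def Let_def
    using card_shifted_residues[of "2 * p" "\<lambda>s. \<bar>s - int p\<bar> \<le> int (u div 2) \<and> (even u \<longrightarrow> s \<noteq> int p)" i] assms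
    by simp
  also have "\<dots> = u" using card_residues_near_middle[OF assms] by simp
  finally show ?thesis .
qed

text \<open>The vertex prod_encode (k, i) is the i-th vertex on level k; the children of vertex i on
  level k are the vertices in block i of length branching n k on level k + 1.\<close>

definition vlevel :: "nat \<Rightarrow> nat" where "vlevel v = fst (prod_decode v)"
definition vindex :: "nat \<Rightarrow> nat" where "vindex v = snd (prod_decode v)"

lemma vlevel_encode [simp]: "vlevel (prod_encode (k, i)) = k"
  by (simp add: vlevel_def)

lemma vindex_encode [simp]: "vindex (prod_encode (k, i)) = i"
  by (simp add: vindex_def)

lemma encode_vlevel_vindex: "prod_encode (vlevel v, vindex v) = v"
  by (simp add: vlevel_def vindex_def)

lemma vlevel_0 [simp]: "vlevel 0 = 0" and vindex_0 [simp]: "vindex 0 = 0"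
  using vlevel_encode[of 0 0] vindex_encode[of 0 0] by (simp_all add: prod_encode_def)

lemma mem_encode_image_iff: "y \<in> (\<lambda>j. prod_encode (k, j)) ` S \<longleftrightarrow> vlevel y = k \<and> vindex y \<in> S"
  using encode_vlevel_vindex[of y] by force

lemma card_encode_image: "card ((\<lambda>j. prod_encode (k, j)) ` S) = card S"
  by (rule card_image) (auto intro: inj_onI)

definition branching :: "nat \<Rightarrow> nat \<Rightarrow> nat" where
  "branching n k = (if k = 0 then 2 * n else n)"

definition level_size :: "nat \<Rightarrow> nat \<Rightarrow> nat" where
  "level_size n k = (if k = 0 then 1 else 2 * n ^ k)"

lemma level_size_Suc: "level_size n (Suc k) = level_size n k * branching n k"
  by (simp add: level_size_def branching_def)

lemma div_eq_iff_mem_block: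
  fixes b :: nat
  assumes "0 < b"
  shows "(j < m * b \<and> j div b = i) \<longleftrightarrow> (i < m \<and> j \<in> {b * i..<b * i + b})"
proof
  assume h: "j < m * b \<and> j div b = i"
  then have "i < m" using less_mult_imp_div_less by blast
  moreover have "b * i + j mod b = j" using h mult_div_mod_eq[of b j] by simp
  ultimately show "i < m \<and> j \<in> {b * i..<b * i + b}" using assms mod_less_divisor[OF assms, of j] by auto
next
  assume h: "i < m \<and> j \<in> {b * i..<b * i + b}"
  then have "b * (i + 1) \<le> b * m" by (intro mult_le_mono2) simp
  then have "j < m * b" using h by (simp add: algebra_simps)
  moreover have "j div b = i" using h by (intro div_nat_eqI) auto
  ultimately show "j < m * b \<and> j div b = i" by simp
qed

definition spider_vertices :: "nat \<Rightarrow> nat set" where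
  "spider_vertices n = {v. vindex v < level_size n (vlevel v)}"

definition tree_edge :: "nat \<Rightarrow> nat \<Rightarrow> nat \<Rightarrow> bool" where
  "tree_edge n v w \<longleftrightarrow> vlevel w = Suc (vlevel v) \<and> vindex w div branching n (vlevel v) = vindex v"

definition spider_adj :: "nat \<Rightarrow> nat \<Rightarrow> nat \<Rightarrow> nat \<Rightarrow> bool" where
  "spider_adj n u v w \<longleftrightarrow> v \<in> spider_vertices n \<and> w \<in> spider_vertices n \<and>
     (tree_edge n v w \<or> tree_edge n w v \<or>
      vlevel v = vlevel w \<and> 0 < vlevel v \<and> near_antipode (n ^ vlevel v) u (vindex v) (vindex w))"

definition tree_parent :: "nat \<Rightarrow> nat \<Rightarrow> nat" where
  "tree_parent n w = prod_encode (vlevel w - 1, vindex w div branching n (vlevel w - 1))"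

lemma zero_mem_spider_vertices: "0 \<in> spider_vertices n"
  by (simp add: spider_vertices_def level_size_def)

lemma vlevel_eq_0_iff: "v \<in> spider_vertices n \<Longrightarrow> vlevel v = 0 \<longleftrightarrow> v = 0"
  using encode_vlevel_vindex[of v] by (auto simp: spider_vertices_def level_size_def prod_encode_def)

lemma tree_edge_iff_eq_parent: "0 < vlevel w \<Longrightarrow> tree_edge n v w \<longleftrightarrow> v = tree_parent n w"
  using encode_vlevel_vindex[of v] by (auto simp: tree_edge_def tree_parent_def)

lemma tree_parent_mem:
  assumes "w \<in> spider_vertices n" and "0 < vlevel w" and "0 < n"
  shows "tree_parent n w \<in> spider_vertices n"
proof -
  obtain k where k: "vlevel w = Suc k" using assms(2) gr0_implies_Suc by blast
  then have "vindex w < level_size n k * branching n k"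
    using assms(1) by (simp add: spider_vertices_def level_size_Suc)
  then have "vindex w div branching n k < level_size n k" by (rule less_mult_imp_div_less)
  then show ?thesis using k by (simp add: spider_vertices_def tree_parent_def)
qed

context
  fixes n u :: nat
  assumes n_pos: "0 < n" and u_less: "u < 2 * n"
begin

lemma u_less_level_size: "0 < k \<Longrightarrow> u < 2 * n ^ k"
  using u_less power_increasing[of 1 k n] n_pos by simp

lemma spider_graded_graph: "graded_graph (spider_vertices n) (spider_adj n u) 0 vlevel"
proof
  show "spider_adj n u x y = spider_adj n u y x" for x y
    unfolding spider_adj_def using near_antipode_sym by auto
  show "\<exists>y. spider_adj n u y x \<and> vlevel x = Suc (vlevel y)"
    if "x \<in> spider_vertices n" "x \<noteq> 0" for x
  proof -
    have "0 < vlevel x" using that vlevel_eq_0_iff by blast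
    then have "tree_edge n (tree_parent n x) x" "tree_parent n x \<in> spider_vertices n"
      using tree_edge_iff_eq_parent tree_parent_mem that(1) n_pos by blast+
    then show ?thesis using that(1) by (auto simp: spider_adj_def tree_edge_def)
  qed
qed (auto simp: spider_adj_def tree_edge_def zero_mem_spider_vertices)

interpretation spider: graded_graph "spider_vertices n" "spider_adj n u" 0 vlevel
  by (rule spider_graded_graph)

lemma omega_up_spider:
  assumes x: "x \<in> spider_vertices n"
  defines "b \<equiv> branching n (vlevel x)"
  shows "omega_set (spider_vertices n) (spider_adj n u) 0 1 x
    = (\<lambda>j. prod_encode (Suc (vlevel x), j)) ` {b * vindex x..<b * vindex x + b}"
proof -
  have b: "0 < b" using n_pos by (simp add: b_def branching_def)
  have "spider_adj n u y x \<and> int (vlevel y) = int (vlevel x) + 1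
        \<longleftrightarrow> vlevel y = Suc (vlevel x) \<and> vindex y \<in> {b * vindex x..<b * vindex x + b}" for y
  proof -
    have "spider_adj n u y x \<and> int (vlevel y) = int (vlevel x) + 1
        \<longleftrightarrow> vlevel y = Suc (vlevel x) \<and> y \<in> spider_vertices n \<and> tree_edge n x y"
      using x spider.adj_sym by (auto simp: spider_adj_def tree_edge_def)
    also have "\<dots> \<longleftrightarrow> vlevel y = Suc (vlevel x) \<and> vindex y < level_size n (vlevel x) * b \<and> vindex y div b = vindex x"
      by (auto simp: spider_vertices_def tree_edge_def level_size_Suc b_def)
    also have "\<dots> \<longleftrightarrow> vlevel y = Suc (vlevel x) \<and> vindex y \<in> {b * vindex x..<b * vindex x + b}"
      using div_eq_iff_mem_block[OF b] x by (auto simp: spider_vertices_def)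
    finally show ?thesis .
  qed
  then show ?thesis unfolding spider.omega_set_eq[OF x] mem_encode_image_iff set_eq_iff by simp
qed

lemma omega_down_spider:
  assumes x: "x \<in> spider_vertices n"
  shows "omega_set (spider_vertices n) (spider_adj n u) 0 (-1) x = (if x = 0 then {} else {tree_parent n x})"
proof (cases "x = 0")
  case False
  then have l: "0 < vlevel x" using x vlevel_eq_0_iff by blast
  have "spider_adj n u y x \<and> int (vlevel y) = int (vlevel x) + - 1 \<longleftrightarrow> y = tree_parent n x" for y
  proof
    assume "spider_adj n u y x \<and> int (vlevel y) = int (vlevel x) + - 1"
    then have "tree_edge n y x" by (auto simp: spider_adj_def tree_edge_def)
    then show "y = tree_parent n x" using tree_edge_iff_eq_parent l by blast
  next
    assume y: "y = tree_parent n x"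
    then have "tree_edge n y x" "y \<in> spider_vertices n"
      using tree_edge_iff_eq_parent tree_parent_mem l x n_pos by blast+
    then show "spider_adj n u y x \<and> int (vlevel y) = int (vlevel x) + - 1"
      using x by (auto simp: spider_adj_def tree_edge_def)
  qed
  then show ?thesis unfolding spider.omega_set_eq[OF x] using False by auto
qed (simp add: spider.omega_set_eq[OF zero_mem_spider_vertices])

lemma omega_same_spider:
  assumes x: "x \<in> spider_vertices n" and "x \<noteq> 0"
  shows "omega_set (spider_vertices n) (spider_adj n u) 0 0 x =
    (\<lambda>j. prod_encode (vlevel x, j)) ` {j. j < 2 * n ^ vlevel x \<and> near_antipode (n ^ vlevel x) u (vindex x) j}"
proof -
  have l: "0 < vlevel x" using assms vlevel_eq_0_iff by blast
  have "spider_adj n u y x \<and> int (vlevel y) = int (vlevel x) + 0 \<longleftrightarrow>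
    vlevel y = vlevel x \<and> vindex y < 2 * n ^ vlevel x \<and> near_antipode (n ^ vlevel x) u (vindex x) (vindex y)" for y
  proof (cases "vlevel y = vlevel x")
    case True
    then have "\<not> tree_edge n y x" "\<not> tree_edge n x y" by (simp_all add: tree_edge_def)
    moreover have "y \<in> spider_vertices n \<longleftrightarrow> vindex y < 2 * n ^ vlevel x"
      using True l by (simp add: spider_vertices_def level_size_def)
    ultimately show ?thesis
      using True x l near_antipode_sym[of "n ^ vlevel x" u "vindex y" "vindex x"]
      by (simp add: spider_adj_def)
  qed simp
  then show ?thesis unfolding spider.omega_set_eq[OF x] mem_encode_image_iff set_eq_iff by auto
qed

lemma omega_same_spider_root: "omega_set (spider_vertices n) (spider_adj n u) 0 0 0 = {}"
  using vlevel_eq_0_iff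
  by (auto simp: spider.omega_set_eq[OF zero_mem_spider_vertices] spider_adj_def tree_edge_def)

lemma spider_adj_irrefl: "\<not> spider_adj n u x x"
proof
  assume "spider_adj n u x x"
  then have "0 < vlevel x" "near_antipode (n ^ vlevel x) u (vindex x) (vindex x)"
    by (auto simp: spider_adj_def tree_edge_def)
  then show False using near_antipode_irrefl u_less_level_size by blast
qed

lemma has_card_encode_image:
  "finite S \<Longrightarrow> card S = m \<Longrightarrow> has_card ((\<lambda>j. prod_encode (k, j)) ` S) m"
  by (simp add: has_card_def card_encode_image)

lemma spidernet_spider: "spidernet (spider_vertices n) (spider_adj n u) 0 (2 * n) (n + 1 + u) n"
  unfolding spidernet_def
proof (intro conjI ballI)
  show "rooted_graph (spider_vertices n) (spider_adj n u) 0"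
    unfolding rooted_graph_def
    using spider.adj_in_V spider.adj_sym zero_mem_spider_vertices spider_adj_irrefl by blast
  show "has_card (omega_set (spider_vertices n) (spider_adj n u) 0 1 0) (2 * n)"
    unfolding omega_up_spider[OF zero_mem_spider_vertices]
    by (rule has_card_encode_image) (simp_all add: branching_def)
  fix x assume "x \<in> spider_vertices n - {0}"
  then have x: "x \<in> spider_vertices n" "x \<noteq> 0" by auto
  then have l: "0 < vlevel x" using vlevel_eq_0_iff by blast
  show "has_card (omega_set (spider_vertices n) (spider_adj n u) 0 1 x) n"
    unfolding omega_up_spider[OF x(1)] using l
    by (intro has_card_encode_image) (simp_all add: branching_def)
  show "has_card (omega_set (spider_vertices n) (spider_adj n u) 0 (-1) x) 1"
    using x by (simp add: omega_down_spider has_card_def)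
  show "has_card (omega_set (spider_vertices n) (spider_adj n u) 0 0 x) (n + 1 + u - 1 - n)"
    unfolding omega_same_spider[OF x] using card_near_antipode[OF u_less_level_size[OF l]]
    by (intro has_card_encode_image) simp_all
qed (use n_pos u_less spider.connected in
      \<open>simp_all add: has_card_def omega_down_spider omega_same_spider_root zero_mem_spider_vertices\<close>)

end

lemma spidernet_same_level_degree_less_root_degree:
  assumes "spidernet V A r a b c"
  shows "b - 1 - c < a"
proof -
  have rg: "rooted_graph V A r" and conn: "connected_graph V A" and "1 \<le> a"
    and up: "finite (omega_set V A r 1 r)" "card (omega_set V A r 1 r) = a"
    and same: "\<And>x. x \<in> V - {r} \<Longrightarrow> has_card (omega_set V A r 0 x) (b - 1 - c)"
    using assms unfolding spidernet_def has_card_def by auto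
  have r: "r \<in> V" and sym: "\<And>x y. A x y = A y x" and irrefl: "\<And>x. \<not> A x x"
    using rg unfolding rooted_graph_def by auto
  have "omega_set V A r 1 r \<noteq> {}" using up \<open>1 \<le> a\<close> by auto
  then obtain x where x: "x \<in> omega_set V A r 1 r" by blast
  then have "x \<in> V" "gdist A r x = 1" "x \<noteq> r"
    using gdist_refl[of A r] by (auto simp: omega_set_def)
  have "omega_set V A r 0 x \<subseteq> omega_set V A r 1 r - {x}"
  proof
    fix y assume "y \<in> omega_set V A r 0 x"
    then have y: "y \<in> V" "A y x" "gdist A r y = 1"
      using \<open>gdist A r x = 1\<close> by (auto simp: omega_set_def)
    obtain ys where "walk_betw A r ys y" using conn r y(1) unfolding connected_graph_def by blast
    then have "A r y" using y(3) by (rule adjacent_if_gdist_eq_1)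
    then have "A y r" using sym[of y r] by blast
    moreover have "y \<noteq> x" using y(2) irrefl[of y] by auto
    ultimately show "y \<in> omega_set V A r 1 r - {x}"
      using y gdist_refl[of A r] by (simp add: omega_set_def)
  qed
  then have "card (omega_set V A r 0 x) \<le> card (omega_set V A r 1 r - {x})"
    using up(1) by (intro card_mono) auto
  also have "\<dots> < a" using up x \<open>1 \<le> a\<close> by simp
  finally show ?thesis
    using same[of x] \<open>x \<in> V\<close> \<open>x \<noteq> r\<close> by (simp add: has_card_def)
qed

theorem mainTheorem8:
  fixes n u :: nat
  assumes "1 \<le> n"
  shows "(\<exists>(V :: nat set) A r. spidernet V A r (2 * n) (n + 1 + u) n) \<longleftrightarrow> u \<le> 2 * n - 1"
proof
  assume "\<exists>(V :: nat set) A r. spidernet V A r (2 * n) (n + 1 + u) n"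
  then obtain V :: "nat set" and A r where "spidernet V A r (2 * n) (n + 1 + u) n" by blast
  then have "n + 1 + u - 1 - n < 2 * n" by (rule spidernet_same_level_degree_less_root_degree)
  then show "u \<le> 2 * n - 1" by simp
next
  assume "u \<le> 2 * n - 1"
  then have "u < 2 * n" using assms by simp
  then have "spidernet (spider_vertices n) (spider_adj n u) 0 (2 * n) (n + 1 + u) n"
    using spidernet_spider assms by simp
  then show "\<exists>(V :: nat set) A r. spidernet V A r (2 * n) (n + 1 + u) n" by blast
qed

end
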